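(* Let $\mathsf A_1,\dots,\mathsf A_n$ be quantum observables on a finite-dimensional Hilbert space with finite outcome sets, and for each $j$ let $\widetilde{\mathsf A}_j(x')=\sum_x\nu_j(x',x)\mathsf A_j(x)$ for some stochastic matrix $\nu_j$ (a post-processing of $\mathsf A_j$). Let $\mathcal S_0$ be a set of states. If $\widetilde{\mathsf A}_1,\dots,\widetilde{\mathsf A}_n$ are $\mathcal S_0$-incompatible, then $\mathsf A_1,\dots,\mathsf A_n$ are $\mathcal S_0$-incompatible, and $$\chi_{incomp}(\widetilde{\mathsf A}_1,\dots,\widetilde{\mathsf A}_n)\ge\chi_{incomp}(\mathsf A_1,\dots,\mathsf A_n),\qquad\chi_{comp}(\widetilde{\mathsf A}_1,\dots,\widetilde{\mathsf A}_n)\ge\chi_{comp}(\mathsf A_1,\dots,\mathsf A_n).$$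
   Context: $\mathcal S$ denotes the set of density operators on a $d$-dimensional Hilbert space. An observable with finite outcome set $X$ is a POVM $x\mapsto\mathsf A(x)$. A stochastic matrix $\nu$ satisfies $\nu(x',x)\ge0$ and $\sum_{x'}\nu(x',x)=1$. Observables $\mathsf A_1,\dots,\mathsf A_n$ (outcome sets $X_1,\dots,X_n$) are compatible if there is an observable $\mathsf G$ on $X_1\times\dots\times X_n$ whose marginals ($\mathsf A_j(x_j)=\sum_{x_l,l\ne j}\mathsf G(x_1,\dots,x_n)$) are the $\mathsf A_j$; otherwise incompatible. For $\mathcal S_0\subset\mathcal S$, they are $\mathcal S_0$-compatible if there exist compatible observables $\mathsf A'_1,\dots,\mathsf A'_n$ (same outcome sets) with $\mathrm{Tr}[\varrho\mathsf A'_j(x)]=\mathrm{Tr}[\varrho\mathsf A_j(x)]$ for all $j,x$ and $\varrho\in\mathcal S_0$; otherwise $\mathcal S_0$-incompatible. For incompatible observables, $\chi_{incomp}=\min\{\dim\mathrm{aff}\mathcal S_0+1:\mathcal S_0\subset\mathcal S,\ \mathcal S_0\text{-incompatible}\}$ and $\chi_{comp}=\max\{\dim\mathrm{aff}\mathcal S_0+1:\mathcal S_0\subset\mathcal S,\ \mathcal S_0\text{-compatible}\}$. *)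

theory Defs
  imports "HOL-Analysis.Analysis"
begin

text \<open>Operators on a d-dimensional Hilbert space are d x d complex matrices,
  with the dimension given by a finite index type 'd.\<close>

type_synonym 'd cmat = "complex ^ 'd ^ 'd"

definition mtrace :: "'d::finite cmat \<Rightarrow> complex" where
  "mtrace A = (\<Sum>i\<in>UNIV. A $ i $ i)"

definition quad_form :: "'d::finite cmat \<Rightarrow> complex ^ 'd \<Rightarrow> complex" where
  "quad_form A v = (\<Sum>i\<in>UNIV. cnj (v $ i) * (A *v v) $ i)"

text \<open>Positive semidefinite: the quadratic form is real and nonnegative
  (over the complex numbers this implies self-adjointness).\<close>
definition psd :: "'d::finite cmat \<Rightarrow> bool" where
  "psd A \<longleftrightarrow> (\<forall>v. Im (quad_form A v) = 0 \<and> 0 \<le> Re (quad_form A v))"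

definition density_ops :: "'d::finite cmat set" where
  "density_ops = {\<rho>. psd \<rho> \<and> mtrace \<rho> = 1}"

definition povm :: "'x set \<Rightarrow> ('x \<Rightarrow> 'd::finite cmat) \<Rightarrow> bool" where
  "povm X A \<longleftrightarrow> finite X \<and> (\<forall>x\<in>X. psd (A x)) \<and> (\<Sum>x\<in>X. A x) = mat 1"

text \<open>Observables A 0, ..., A (n-1) with outcome sets X 0, ..., X (n-1).
  Outcomes of the joint observable are tuples g with g j \<in> X j for j < n.\<close>
definition compatible ::
  "nat \<Rightarrow> (nat \<Rightarrow> 'x set) \<Rightarrow> (nat \<Rightarrow> 'x \<Rightarrow> 'd::finite cmat) \<Rightarrow> bool" where
  "compatible n X A \<longleftrightarrow>
     (\<exists>G. povm (PiE {..<n} X) G \<and>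
          (\<forall>j<n. \<forall>x\<in>X j. A j x = (\<Sum>g\<in>{g\<in>PiE {..<n} X. g j = x}. G g)))"

definition S0_compatible ::
  "'d::finite cmat set \<Rightarrow> nat \<Rightarrow> (nat \<Rightarrow> 'x set) \<Rightarrow> (nat \<Rightarrow> 'x \<Rightarrow> 'd cmat) \<Rightarrow> bool" where
  "S0_compatible S0 n X A \<longleftrightarrow>
     (\<exists>A'. (\<forall>j<n. povm (X j) (A' j)) \<and> compatible n X A' \<and>
           (\<forall>j<n. \<forall>x\<in>X j. \<forall>\<rho>\<in>S0. mtrace (\<rho> ** A' j x) = mtrace (\<rho> ** A j x)))"

abbreviation S0_incompatible ::
  "'d::finite cmat set \<Rightarrow> nat \<Rightarrow> (nat \<Rightarrow> 'x set) \<Rightarrow> (nat \<Rightarrow> 'x \<Rightarrow> 'd cmat) \<Rightarrow> bool" where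
  "S0_incompatible S0 n X A \<equiv> \<not> S0_compatible S0 n X A"

text \<open>dim aff S0 is the (real) affine dimension; aff_dim {} = -1.\<close>
definition chi_incomp ::
  "nat \<Rightarrow> (nat \<Rightarrow> 'x set) \<Rightarrow> (nat \<Rightarrow> 'x \<Rightarrow> 'd::finite cmat) \<Rightarrow> int" where
  "chi_incomp n X A =
     Min {aff_dim S0 + 1 | S0. S0 \<subseteq> density_ops \<and> S0_incompatible S0 n X A}"

definition chi_comp ::
  "nat \<Rightarrow> (nat \<Rightarrow> 'x set) \<Rightarrow> (nat \<Rightarrow> 'x \<Rightarrow> 'd::finite cmat) \<Rightarrow> int" where
  "chi_comp n X A =
     Max {aff_dim S0 + 1 | S0. S0 \<subseteq> density_ops \<and> S0_compatible S0 n X A}"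

definition post_process ::
  "nat \<Rightarrow> (nat \<Rightarrow> 'x set) \<Rightarrow> (nat \<Rightarrow> 'y \<Rightarrow> 'x \<Rightarrow> real) \<Rightarrow> (nat \<Rightarrow> 'x \<Rightarrow> 'd::finite cmat)
     \<Rightarrow> nat \<Rightarrow> 'y \<Rightarrow> 'd cmat" where
  "post_process n X \<nu> A j y = (\<Sum>x\<in>X j. \<nu> j y x *\<^sub>R A j x)"

definition stochastic :: "'y set \<Rightarrow> 'x set \<Rightarrow> ('y \<Rightarrow> 'x \<Rightarrow> real) \<Rightarrow> bool" where
  "stochastic Y X \<nu> \<longleftrightarrow> (\<forall>y\<in>Y. \<forall>x\<in>X. 0 \<le> \<nu> y x) \<and> (\<forall>x\<in>X. (\<Sum>y\<in>Y. \<nu> y x) = 1)"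

end

theory Submission imports Defs begin

text \<open>Post-processing commutes with taking joint observables: if G is a joint observable for
  A'_1, ..., A'_n, then relabelling each outcome tuple g into h with probability
  \<Prod>_k \<nu>_k(h_k, g_k) yields a joint observable for the post-processed A'_j.
  Since post-processing is linear, it also preserves agreement of expectation values on
  the states of S0. Hence S0-compatibility of the A_j implies that of the post-processed
  observables, which is the first claim in contrapositive form. Both \<chi> inequalities then
  follow by comparing the sets over which the minimum and maximum are taken: these are
  finite sets of integers, as affine dimensions are bounded by the dimension of the space,
  and the maximum is never taken over the empty set, because every family of observables
  is compatible on S0 = {} (witnessed by constant, deterministic observables).\<close>

lemma quad_form_add: "quad_form (A + B) v = quad_form A v + quad_form B v"
  unfolding quad_form_def by (simp add: matrix_vector_mult_add_rdistrib distrib_left sum.distrib)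

lemma quad_form_scaleR: "quad_form (c *\<^sub>R A) v = of_real c * quad_form A v"
  unfolding quad_form_def matrix_vector_mult_def
  by (simp only: vec_lambda_beta vector_scaleR_component sum_distrib_left)
    (intro sum.cong refl, simp only: scaleR_conv_of_real mult_ac)

lemma quad_form_zero: "quad_form 0 v = 0"
  unfolding quad_form_def by simp

lemma quad_form_sum: "quad_form (sum f S) v = (\<Sum>i\<in>S. quad_form (f i) v)"
  by (induction S rule: infinite_finite_induct) (auto simp: quad_form_zero quad_form_add)

lemma psd_zero: "psd 0"
  unfolding psd_def by (simp add: quad_form_zero)

lemma psd_mat_1: "psd (mat 1)"
  unfolding psd_def quad_form_def by (simp add: mult.commute complex_mult_cnj sum_nonneg)

lemma psd_sum_scaleR:
  assumes "\<And>i. i \<in> S \<Longrightarrow> psd (f i)" and "\<And>i. i \<in> S \<Longrightarrow> 0 \<le> c i"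
  shows "psd (\<Sum>i\<in>S. c i *\<^sub>R f i)"
  unfolding psd_def
proof
  fix v
  have real: "quad_form (f i) v = of_real (Re (quad_form (f i) v))" if "i \<in> S" for i
    using assms(1)[OF that] unfolding psd_def by (simp add: complex_eq_iff)
  have "quad_form (\<Sum>i\<in>S. c i *\<^sub>R f i) v = of_real (\<Sum>i\<in>S. c i * Re (quad_form (f i) v))"
    unfolding quad_form_sum quad_form_scaleR of_real_sum
    by (intro sum.cong refl) (subst real, simp_all)
  moreover have "0 \<le> (\<Sum>i\<in>S. c i * Re (quad_form (f i) v))"
    using assms unfolding psd_def by (intro sum_nonneg mult_nonneg_nonneg) auto
  ultimately show "Im (quad_form (\<Sum>i\<in>S. c i *\<^sub>R f i) v) = 0
      \<and> 0 \<le> Re (quad_form (\<Sum>i\<in>S. c i *\<^sub>R f i) v)"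
    by simp
qed

lemma mtrace_add: "mtrace (A + B) = mtrace A + mtrace B"
  unfolding mtrace_def by (simp add: sum.distrib)

lemma mtrace_scaleR: "mtrace (c *\<^sub>R A) = of_real c * mtrace A"
  unfolding mtrace_def
  by (simp only: vector_scaleR_component scaleR_sum_right[symmetric]) (simp add: scaleR_conv_of_real)

lemma mtrace_mult_sum_scaleR:
  "mtrace (\<rho> ** (\<Sum>i\<in>S. c i *\<^sub>R f i)) = (\<Sum>i\<in>S. of_real (c i) * mtrace (\<rho> ** f i))"
proof (induction S rule: infinite_finite_induct)
  case (insert x F)
  then show ?case
    by (simp add: matrix_add_ldistrib mtrace_add mtrace_scaleR matrix_scalar_ac scalar_matrix_assoc[symmetric])
qed (auto simp: mtrace_def)

lemma povm_nonempty:
  assumes "povm X (A :: 'x \<Rightarrow> 'd::finite cmat)"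
  shows "X \<noteq> {}"
proof
  assume "X = {}"
  then have "(mat 1 :: 'd cmat) $ undefined $ undefined = 0"
    using assms by (simp add: povm_def)
  then show False
    by (simp add: mat_def)
qed

lemma PiE_fibre_eq:
  assumes "j \<in> I" and "y \<in> Y j"
  shows "{h \<in> PiE I Y. h j = y} = PiE I (\<lambda>k. if k = j then {y} else Y k)"
proof (intro set_eqI iffI)
  fix h
  assume h: "h \<in> PiE I (\<lambda>k. if k = j then {y} else Y k)"
  then have "h j = y"
    using assms(1) by (auto simp: PiE_iff dest: bspec[of _ _ j])
  moreover have "h \<in> PiE I Y"
    using h assms(2) unfolding PiE_iff by (metis singletonD)
  ultimately show "h \<in> {h \<in> PiE I Y. h j = y}"
    by simp
qed (simp add: PiE_iff)

lemma sum_PiE_prod_eq_1: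
  fixes f :: "'i \<Rightarrow> 'a \<Rightarrow> 'b::comm_semiring_1"
  assumes "finite I" and "\<And>k. k \<in> I \<Longrightarrow> finite (Y k)"
    and "\<And>k. k \<in> I \<Longrightarrow> (\<Sum>y\<in>Y k. f k y) = 1"
  shows "(\<Sum>h\<in>PiE I Y. \<Prod>k\<in>I. f k (h k)) = 1"
  using assms by (simp add: prod_sum_PiE[symmetric])

lemma sum_PiE_fibre_prod:
  fixes f :: "'i \<Rightarrow> 'a \<Rightarrow> 'b::comm_semiring_1"
  assumes "finite I" and "\<And>k. k \<in> I \<Longrightarrow> finite (Y k)"
    and "\<And>k. k \<in> I \<Longrightarrow> (\<Sum>y\<in>Y k. f k y) = 1"
    and "j \<in> I" and "y \<in> Y j"
  shows "(\<Sum>h\<in>{h \<in> PiE I Y. h j = y}. \<Prod>k\<in>I. f k (h k)) = f j y"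
proof -
  have "(\<Sum>h\<in>{h \<in> PiE I Y. h j = y}. \<Prod>k\<in>I. f k (h k))
      = (\<Prod>k\<in>I. \<Sum>y'\<in>(if k = j then {y} else Y k). f k y')"
    unfolding PiE_fibre_eq[where j=j and I=I and y=y and Y=Y, OF assms(4,5)]
    using assms(1,2) by (simp add: prod_sum_PiE)
  also have "\<dots> = (\<Prod>k\<in>I. if k = j then f j y else 1)"
    using assms(3) by (intro prod.cong) auto
  also have "\<dots> = f j y"
    using assms(1,4) by (simp add: prod.delta)
  finally show ?thesis .
qed

lemma povm_post_process:
  assumes "povm (X j) (A j)" and "finite (Y j)" and "stochastic (Y j) (X j) (\<nu> j)"
  shows "povm (Y j) (post_process n X \<nu> A j)"
  unfolding povm_def
proof (intro conjI ballI)
  show "psd (post_process n X \<nu> A j y)" if "y \<in> Y j" for y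
    unfolding post_process_def using assms(1,3) that
    by (intro psd_sum_scaleR) (auto simp: povm_def stochastic_def)
  have "(\<Sum>y\<in>Y j. post_process n X \<nu> A j y) = (\<Sum>x\<in>X j. (\<Sum>y\<in>Y j. \<nu> j y x) *\<^sub>R A j x)"
    unfolding post_process_def by (simp add: sum.swap[of _ "Y j"] scaleR_sum_left)
  also have "\<dots> = mat 1"
    using assms(1,3) by (simp add: povm_def stochastic_def)
  finally show "(\<Sum>y\<in>Y j. post_process n X \<nu> A j y) = mat 1" .
qed (fact assms(2))

lemma compatible_post_process:
  assumes finX: "\<forall>j<n. finite (X j)" and finY: "\<forall>j<n. finite (Y j)"
    and stoch: "\<forall>j<n. stochastic (Y j) (X j) (\<nu> j)"
    and "compatible n X A"
  shows "compatible n Y (post_process n X \<nu> A)"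
proof -
  obtain G where G: "povm (PiE {..<n} X) G"
    and marginal: "\<forall>j<n. \<forall>x\<in>X j. A j x = (\<Sum>g\<in>{g \<in> PiE {..<n} X. g j = x}. G g)"
    using assms(4) unfolding compatible_def by blast
  define H where "H h = (\<Sum>g\<in>PiE {..<n} X. (\<Prod>k<n. \<nu> k (h k) (g k)) *\<^sub>R G g)" for h
  have \<nu>_sum: "(\<Sum>y\<in>Y k. \<nu> k y (g k)) = 1" if "g \<in> PiE {..<n} X" "k < n" for g k
    using stoch that by (auto simp: stochastic_def PiE_iff)
  have total: "(\<Sum>h\<in>PiE {..<n} Y. \<Prod>k<n. \<nu> k (h k) (g k)) = 1"
    if "g \<in> PiE {..<n} X" for g
    using finY \<nu>_sum[OF that] by (intro sum_PiE_prod_eq_1) auto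
  have fibre: "(\<Sum>h\<in>{h \<in> PiE {..<n} Y. h j = y}. \<Prod>k<n. \<nu> k (h k) (g k)) = \<nu> j y (g j)"
    if "g \<in> PiE {..<n} X" and "j < n" and "y \<in> Y j" for g j y
    using finY \<nu>_sum[OF that(1)] that(2,3) by (intro sum_PiE_fibre_prod) auto
  have sum_H: "(\<Sum>h\<in>F. H h) = (\<Sum>g\<in>PiE {..<n} X. (\<Sum>h\<in>F. \<Prod>k<n. \<nu> k (h k) (g k)) *\<^sub>R G g)"
    for F
    unfolding H_def by (simp add: sum.swap[of _ F] scaleR_sum_left)
  have "povm (PiE {..<n} Y) H"
    unfolding povm_def
  proof (intro conjI ballI)
    show "finite (PiE {..<n} Y)"
      using finY by (intro finite_PiE) auto
    show "psd (H h)" if "h \<in> PiE {..<n} Y" for h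
      unfolding H_def using G stoch that
      by (intro psd_sum_scaleR prod_nonneg) (auto simp: povm_def stochastic_def PiE_iff)
    show "(\<Sum>h\<in>PiE {..<n} Y. H h) = mat 1"
      unfolding sum_H using G by (simp add: total povm_def)
  qed
  moreover have "post_process n X \<nu> A j y = (\<Sum>h\<in>{h \<in> PiE {..<n} Y. h j = y}. H h)"
    if j: "j < n" and y: "y \<in> Y j" for j y
  proof -
    have "(\<Sum>h\<in>{h \<in> PiE {..<n} Y. h j = y}. H h) = (\<Sum>g\<in>PiE {..<n} X. \<nu> j y (g j) *\<^sub>R G g)"
      unfolding sum_H using j y by (simp add: fibre)
    also have "\<dots> = (\<Sum>x\<in>X j. \<Sum>g\<in>{g \<in> PiE {..<n} X. g j = x}. \<nu> j y (g j) *\<^sub>R G g)"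
      using G finX j by (intro sum.group[symmetric]) (auto simp: povm_def)
    also have "\<dots> = post_process n X \<nu> A j y"
      unfolding post_process_def using marginal j by (simp add: scaleR_sum_right)
    finally show ?thesis by simp
  qed
  ultimately show ?thesis
    unfolding compatible_def by blast
qed

lemma S0_compatible_post_process:
  assumes "\<forall>j<n. finite (Y j)" and "\<forall>j<n. stochastic (Y j) (X j) (\<nu> j)"
    and "S0_compatible S0 n X A"
  shows "S0_compatible S0 n Y (post_process n X \<nu> A)"
proof -
  obtain A' where A': "\<forall>j<n. povm (X j) (A' j)" and "compatible n X A'"
    and agree: "\<forall>j<n. \<forall>x\<in>X j. \<forall>\<rho>\<in>S0. mtrace (\<rho> ** A' j x) = mtrace (\<rho> ** A j x)"
    using assms(3) unfolding S0_compatible_def by blast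
  have "compatible n Y (post_process n X \<nu> A')"
    using A' assms(1,2) \<open>compatible n X A'\<close> by (intro compatible_post_process) (auto simp: povm_def)
  moreover have "\<forall>j<n. povm (Y j) (post_process n X \<nu> A' j)"
    using A' assms(1,2) by (simp add: povm_post_process)
  moreover have "mtrace (\<rho> ** post_process n X \<nu> A' j y) = mtrace (\<rho> ** post_process n X \<nu> A j y)"
    if "j < n" and "\<rho> \<in> S0" for j y \<rho>
    unfolding post_process_def mtrace_mult_sum_scaleR using agree that by simp
  ultimately show ?thesis
    unfolding S0_compatible_def by blast
qed

lemma compatible_deterministic:
  assumes "\<forall>j<n. finite (X j)" and "\<forall>j<n. x0 j \<in> X j"
  shows "compatible n X (\<lambda>j x. if x = x0 j then mat 1 else (0 :: 'd::finite cmat))"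
proof -
  define g0 where "g0 = restrict x0 {..<n}"
  have g0: "g0 \<in> PiE {..<n} X"
    using assms(2) unfolding g0_def by auto
  have "finite (PiE {..<n} X)"
    using assms(1) by (intro finite_PiE) auto
  then have "povm (PiE {..<n} X) (\<lambda>g. if g = g0 then mat 1 else 0)"
    using g0 by (auto simp: povm_def psd_zero psd_mat_1)
  moreover have "(if x = x0 j then mat 1 else 0)
      = (\<Sum>g\<in>{g \<in> PiE {..<n} X. g j = x}. if g = g0 then mat 1 else (0 :: 'd cmat))"
    if "j < n" for j x
    using g0 \<open>finite (PiE {..<n} X)\<close> that by (auto simp: g0_def)
  ultimately show ?thesis
    unfolding compatible_def by blast
qed

lemma S0_compatible_empty:
  assumes "\<forall>j<n. povm (X j) (A j)"
  shows "S0_compatible {} n X A"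
proof -
  define x0 where "x0 j = (SOME x. x \<in> X j)" for j
  have "\<forall>j<n. x0 j \<in> X j"
    using assms povm_nonempty unfolding x0_def by (metis some_in_eq)
  moreover have "\<forall>j<n. finite (X j)"
    using assms by (simp add: povm_def)
  ultimately show ?thesis
    unfolding S0_compatible_def
    by (intro exI[of _ "\<lambda>j x. if x = x0 j then mat 1 else 0"] conjI compatible_deterministic)
      (auto simp: povm_def psd_zero psd_mat_1)
qed

lemma finite_aff_dim_values: "finite {aff_dim S + 1 | S :: 'a::euclidean_space set. P S}"
proof -
  have "aff_dim S + 1 \<in> {0..int DIM('a) + 1}" for S :: "'a set"
    using aff_dim_geq[of S] aff_dim_le_DIM[of S] by auto
  then show ?thesis
    by (intro finite_subset[OF _ finite_atLeastAtMost_int]) blast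
qed

lemma chi_incomp_mono:
  fixes A :: "nat \<Rightarrow> 'x \<Rightarrow> 'd::finite cmat" and B :: "nat \<Rightarrow> 'y \<Rightarrow> 'd cmat"
  assumes "\<And>S. S0_compatible S n X A \<Longrightarrow> S0_compatible S n Y B"
    and "S0 \<subseteq> density_ops" and "S0_incompatible S0 n Y B"
  shows "chi_incomp n X A \<le> chi_incomp n Y B"
  unfolding chi_incomp_def
proof (rule Min_antimono)
  show "{aff_dim S + 1 |S. S \<subseteq> density_ops \<and> S0_incompatible S n Y B}
      \<subseteq> {aff_dim S + 1 |S. S \<subseteq> density_ops \<and> S0_incompatible S n X A}"
    using assms(1) by blast
  show "{aff_dim S + 1 |S. S \<subseteq> density_ops \<and> S0_incompatible S n Y B} \<noteq> {}"
    using assms(2,3) by blast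
qed (rule finite_aff_dim_values)

lemma chi_comp_mono:
  fixes A :: "nat \<Rightarrow> 'x \<Rightarrow> 'd::finite cmat" and B :: "nat \<Rightarrow> 'y \<Rightarrow> 'd cmat"
  assumes "\<And>S. S0_compatible S n X A \<Longrightarrow> S0_compatible S n Y B"
    and "S0 \<subseteq> density_ops" and "S0_compatible S0 n X A"
  shows "chi_comp n X A \<le> chi_comp n Y B"
  unfolding chi_comp_def
proof (rule Max_mono)
  show "{aff_dim S + 1 |S. S \<subseteq> density_ops \<and> S0_compatible S n X A}
      \<subseteq> {aff_dim S + 1 |S. S \<subseteq> density_ops \<and> S0_compatible S n Y B}"
    using assms(1) by blast
  show "{aff_dim S + 1 |S. S \<subseteq> density_ops \<and> S0_compatible S n X A} \<noteq> {}"
    using assms(2,3) by blast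
qed (rule finite_aff_dim_values)

theorem proposition4p2:
  fixes n :: nat
    and X :: "nat \<Rightarrow> 'x set" and Y :: "nat \<Rightarrow> 'y set"
    and A :: "nat \<Rightarrow> 'x \<Rightarrow> 'd::finite cmat"
    and \<nu> :: "nat \<Rightarrow> 'y \<Rightarrow> 'x \<Rightarrow> real"
    and S0 :: "'d cmat set"
  assumes obs: "\<forall>j<n. povm (X j) (A j)"
    and finY: "\<forall>j<n. finite (Y j)"
    and stoch: "\<forall>j<n. stochastic (Y j) (X j) (\<nu> j)"
    and states: "S0 \<subseteq> density_ops"
    and incomp: "S0_incompatible S0 n Y (post_process n X \<nu> A)"
  shows "S0_incompatible S0 n X A
    \<and> chi_incomp n Y (post_process n X \<nu> A) \<ge> chi_incomp n X A
    \<and> chi_comp n Y (post_process n X \<nu> A) \<ge> chi_comp n X A"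
proof -
  have post: "S0_compatible S n Y (post_process n X \<nu> A)" if "S0_compatible S n X A" for S
    using finY stoch that by (rule S0_compatible_post_process)
  show ?thesis
    using post incomp chi_incomp_mono[OF post states incomp]
      chi_comp_mono[OF post empty_subsetI S0_compatible_empty[OF obs]]
    by blast
qed

end
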